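(* If $G$ is a very well-covered graph of girth at least $5$, then $\Psi(G)$ is a greedoid on $V(G)$.
   Context: All graphs are finite, simple, undirected. For $A\subseteq V(G)$, $N(A)=\{v\in V(G)-A: N(v)\cap A\neq\emptyset\}$ and $N[A]=A\cup N(A)$; $G[X]$ is the subgraph induced by $X$. A stable set is a set of pairwise non-adjacent vertices; $\alpha(G)$ is the maximum size of a stable set. $G$ is well-covered if all its maximal stable sets have the same cardinality, and very well-covered if it is well-covered, has no isolated vertices, and $|V(G)|=2\alpha(G)$. A set $A\subseteq V(G)$ is a local maximum stable set of $G$ if $A$ is a maximum stable set of $G[N[A]]$; $\Psi(G)$ denotes the family of all local maximum stable sets of $G$. A greedoid on a finite set $V$ is a non-empty family $\mathcal{F}\subseteq 2^V$ such that (Accessibility) every non-empty $X\in\mathcal{F}$ has an element $x\in X$ with $X-\{x\}\in\mathcal{F}$, and (Exchange) for all $X,Y\in\mathcal{F}$ with $|X|=|Y|+1$ there is $x\in X-Y$ with $Y\cup\{x\}\in\mathcal{F}$. *)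

theory Defs
  imports Main
begin

definition graph :: "'a set \<Rightarrow> ('a \<Rightarrow> 'a \<Rightarrow> bool) \<Rightarrow> bool" where
  "graph V E \<longleftrightarrow> finite V \<and> (\<forall>u v. E u v \<longrightarrow> u \<in> V \<and> v \<in> V)
     \<and> (\<forall>u v. E u v \<longrightarrow> E v u) \<and> (\<forall>v. \<not> E v v)"

definition nbhd :: "'a set \<Rightarrow> ('a \<Rightarrow> 'a \<Rightarrow> bool) \<Rightarrow> 'a set \<Rightarrow> 'a set" where
  "nbhd V E A = {v \<in> V - A. \<exists>a\<in>A. E v a}"

definition cnbhd :: "'a set \<Rightarrow> ('a \<Rightarrow> 'a \<Rightarrow> bool) \<Rightarrow> 'a set \<Rightarrow> 'a set" where
  "cnbhd V E A = A \<union> nbhd V E A"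

definition stable :: "('a \<Rightarrow> 'a \<Rightarrow> bool) \<Rightarrow> 'a set \<Rightarrow> bool" where
  "stable E S \<longleftrightarrow> (\<forall>u\<in>S. \<forall>v\<in>S. \<not> E u v)"

text \<open>Stable sets of the induced subgraph G[X]: stable subsets of X.\<close>
definition max_stable :: "'a set \<Rightarrow> ('a \<Rightarrow> 'a \<Rightarrow> bool) \<Rightarrow> 'a set \<Rightarrow> bool" where
  "max_stable X E S \<longleftrightarrow> S \<subseteq> X \<and> stable E S
     \<and> (\<forall>T. T \<subseteq> X \<and> stable E T \<longrightarrow> card T \<le> card S)"

definition alpha :: "'a set \<Rightarrow> ('a \<Rightarrow> 'a \<Rightarrow> bool) \<Rightarrow> nat" where
  "alpha V E = Max {card S | S. S \<subseteq> V \<and> stable E S}"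

definition maximal_stable :: "'a set \<Rightarrow> ('a \<Rightarrow> 'a \<Rightarrow> bool) \<Rightarrow> 'a set \<Rightarrow> bool" where
  "maximal_stable V E S \<longleftrightarrow> S \<subseteq> V \<and> stable E S
     \<and> (\<forall>T. S \<subset> T \<and> T \<subseteq> V \<longrightarrow> \<not> stable E T)"

definition well_covered :: "'a set \<Rightarrow> ('a \<Rightarrow> 'a \<Rightarrow> bool) \<Rightarrow> bool" where
  "well_covered V E \<longleftrightarrow> (\<forall>S T. maximal_stable V E S \<and> maximal_stable V E T \<longrightarrow> card S = card T)"

definition very_well_covered :: "'a set \<Rightarrow> ('a \<Rightarrow> 'a \<Rightarrow> bool) \<Rightarrow> bool" where
  "very_well_covered V E \<longleftrightarrow> well_covered V E \<and> (\<forall>v\<in>V. \<exists>u. E v u)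
     \<and> card V = 2 * alpha V E"

definition is_cycle :: "'a set \<Rightarrow> ('a \<Rightarrow> 'a \<Rightarrow> bool) \<Rightarrow> 'a list \<Rightarrow> bool" where
  "is_cycle V E cs \<longleftrightarrow> length cs \<ge> 3 \<and> distinct cs \<and> set cs \<subseteq> V
     \<and> (\<forall>i < length cs. E (cs ! i) (cs ! ((i + 1) mod length cs)))"

text \<open>Girth at least g: every cycle has length at least g (acyclic graphs have
infinite girth).\<close>
definition girth_ge :: "'a set \<Rightarrow> ('a \<Rightarrow> 'a \<Rightarrow> bool) \<Rightarrow> nat \<Rightarrow> bool" where
  "girth_ge V E g \<longleftrightarrow> (\<forall>cs. is_cycle V E cs \<longrightarrow> length cs \<ge> g)"

definition local_max_stable :: "'a set \<Rightarrow> ('a \<Rightarrow> 'a \<Rightarrow> bool) \<Rightarrow> 'a set \<Rightarrow> bool" where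
  "local_max_stable V E A \<longleftrightarrow> A \<subseteq> V \<and> max_stable (cnbhd V E A) E A"

definition Psi :: "'a set \<Rightarrow> ('a \<Rightarrow> 'a \<Rightarrow> bool) \<Rightarrow> 'a set set" where
  "Psi V E = {A. local_max_stable V E A}"

definition greedoid :: "'a set \<Rightarrow> 'a set set \<Rightarrow> bool" where
  "greedoid V F \<longleftrightarrow> F \<noteq> {} \<and> (\<forall>X\<in>F. X \<subseteq> V)
     \<and> (\<forall>X\<in>F. X \<noteq> {} \<longrightarrow> (\<exists>x\<in>X. X - {x} \<in> F))
     \<and> (\<forall>X\<in>F. \<forall>Y\<in>F. card X = card Y + 1 \<longrightarrow> (\<exists>x\<in>X - Y. Y \<union> {x} \<in> F))"

end

theory Submission
  imports Defs
begin

text \<open>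
  The proof follows the structure theory of such graphs.
  \<^item> Counting (well-covered, C4-free G): 2\<alpha>(G) \<le> |V| + #isolated vertices, and in case of
    equality the non-isolated vertices carry a perfect matching p.  Induction on |V|,
    deleting a pendant edge or the closed neighbourhood of a vertex of degree \<ge> 2.
  \<^item> A very well-covered graph attains equality, and girth \<ge> 5 forces every matching edge
    {x, p x} to have a pendant endpoint, i.e. G is a corona.
  \<^item> In a corona, A \<in> \<Psi>(G) iff A is stable and contains the partner p u of every
    neighbour u of A.
  \<^item> With this description, accessibility and exchange follow by local modifications.
\<close>

section \<open>Stable sets in a finite vertex set\<close>

lemma finite_stable_cards:
  assumes "finite W"
  shows "finite {card S | S. S \<subseteq> W \<and> stable E S}"
  by (rule finite_subset[of _ "card ` Pow W"]) (use assms in auto)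

lemma card_le_alpha:
  assumes "finite W" "T \<subseteq> W" "stable E T"
  shows "card T \<le> alpha W E"
  unfolding alpha_def using assms by (intro Max_ge[OF finite_stable_cards]) auto

lemma alpha_attained:
  assumes "finite W"
  obtains S where "S \<subseteq> W" "stable E S" "card S = alpha W E"
proof -
  have "{card S | S. S \<subseteq> W \<and> stable E S} \<noteq> {}"
    by (auto simp: stable_def intro!: exI[of _ "{}"])
  from Max_in[OF finite_stable_cards[OF assms] this] show ?thesis
    using that unfolding alpha_def by auto
qed

lemma maximal_stable_extends:
  assumes "finite W" "S \<subseteq> W" "stable E S"
  obtains M where "maximal_stable W E M" "S \<subseteq> M"
proof -
  let ?F = "{T. S \<subseteq> T \<and> T \<subseteq> W \<and> stable E T}"
  have "finite ?F" by (rule finite_subset[of _ "Pow W"]) (use assms(1) in auto)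
  moreover have "?F \<noteq> {}" using assms by blast
  ultimately have "\<exists>M\<in>?F. \<forall>T\<in>?F. M \<le> T \<longrightarrow> M = T" by (rule finite_has_maximal)
  then obtain M where M: "M \<in> ?F" and top: "\<forall>T\<in>?F. M \<le> T \<longrightarrow> M = T" ..
  have "maximal_stable W E M"
    unfolding maximal_stable_def
  proof (intro conjI allI impI notI)
    fix T assume "M \<subset> T \<and> T \<subseteq> W" "stable E T"
    then show False using M top by blast
  qed (use M in blast)+
  with M that show ?thesis by blast
qed

lemma maximum_stable_is_maximal:
  assumes "finite W" "S \<subseteq> W" "stable E S" "card S = alpha W E"
  shows "maximal_stable W E S"
  unfolding maximal_stable_def
proof (intro conjI allI impI notI)
  fix T assume T: "S \<subset> T \<and> T \<subseteq> W" and "stable E T"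
  then have "card T \<le> alpha W E" using card_le_alpha assms(1) by blast
  moreover have "card S < card T" using T assms(1) by (meson finite_subset psubset_card_mono)
  ultimately show False using assms(4) by simp
qed (use assms in auto)

lemma well_covered_card:
  assumes "finite W" "well_covered W E" "maximal_stable W E M"
  shows "card M = alpha W E"
proof -
  obtain S where "S \<subseteq> W" "stable E S" "card S = alpha W E"
    using alpha_attained assms(1) by blast
  with maximum_stable_is_maximal assms show ?thesis
    unfolding well_covered_def by metis
qed

lemma maximal_stableD: "maximal_stable W E M \<Longrightarrow> M \<subseteq> W \<and> stable E M"
  by (simp add: maximal_stable_def)

text \<open>Neighbours of v inside W; W plays the role of the vertex set of an induced subgraph.\<close>

definition nbrs :: "'a set \<Rightarrow> ('a \<Rightarrow> 'a \<Rightarrow> bool) \<Rightarrow> 'a \<Rightarrow> 'a set" where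
  "nbrs W E v = {u \<in> W. E v u}"

definition isolated :: "'a set \<Rightarrow> ('a \<Rightarrow> 'a \<Rightarrow> bool) \<Rightarrow> 'a set" where
  "isolated W E = {v \<in> W. nbrs W E v = {}}"

definition pendant :: "'a set \<Rightarrow> ('a \<Rightarrow> 'a \<Rightarrow> bool) \<Rightarrow> 'a \<Rightarrow> 'a \<Rightarrow> bool" where
  "pendant W E v s \<longleftrightarrow> v \<in> W \<and> nbrs W E v = {s}"

text \<open>p is a perfect matching of G[S], encoded as an involution of S moving every vertex
  to a neighbour.\<close>

definition matching_on :: "'a set \<Rightarrow> ('a \<Rightarrow> 'a \<Rightarrow> bool) \<Rightarrow> ('a \<Rightarrow> 'a) \<Rightarrow> bool" where
  "matching_on S E p \<longleftrightarrow> (\<forall>x\<in>S. p x \<in> S \<and> E x (p x) \<and> p (p x) = x)"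

lemma isolated_subset: "isolated W E \<subseteq> W"
  unfolding isolated_def by blast

lemma alpha_all_isolated:
  assumes "finite W" "isolated W E = W"
  shows "alpha W E = card W"
proof -
  have "\<not> E u w" if "u \<in> W" "w \<in> W" for u w
  proof -
    have "u \<in> isolated W E" using that(1) assms(2) by simp
    then have "nbrs W E u = {}" by (simp add: isolated_def)
    then show ?thesis using that(2) by (auto simp: nbrs_def)
  qed
  then have "stable E W" unfolding stable_def by blast
  then have "card W \<le> alpha W E" by (rule card_le_alpha[OF assms(1) subset_refl])
  moreover obtain S where "S \<subseteq> W" "card S = alpha W E" by (rule alpha_attained[OF assms(1)])
  then have "alpha W E \<le> card W" using card_mono[OF assms(1)] by metis
  ultimately show ?thesis by simp
qed

definition alpha_matching_bound :: "'a set \<Rightarrow> ('a \<Rightarrow> 'a \<Rightarrow> bool) \<Rightarrow> bool" where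
  "alpha_matching_bound W E \<longleftrightarrow> 2 * alpha W E \<le> card W + card (isolated W E) \<and>
     (2 * alpha W E = card W + card (isolated W E) \<longrightarrow>
       (\<exists>p. matching_on (W - isolated W E) E p))"

locale simple_graph =
  fixes V :: "'a set" and E :: "'a \<Rightarrow> 'a \<Rightarrow> bool"
  assumes graph: "graph V E"
begin

lemma finite_V: "finite V"
  and edge_V: "E u v \<Longrightarrow> u \<in> V" "E u v \<Longrightarrow> v \<in> V"
  and sym: "E u v \<Longrightarrow> E v u"
  and irrefl: "\<not> E v v"
  using graph unfolding graph_def by blast+

lemma maximal_stable_iff:
  "maximal_stable W E M \<longleftrightarrow> M \<subseteq> W \<and> stable E M \<and> (\<forall>x\<in>W - M. \<exists>m\<in>M. E x m)"
proof
  assume M: "maximal_stable W E M"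
  show "M \<subseteq> W \<and> stable E M \<and> (\<forall>x\<in>W - M. \<exists>m\<in>M. E x m)"
  proof (intro conjI ballI)
    fix x assume x: "x \<in> W - M"
    show "\<exists>m\<in>M. E x m"
    proof (rule ccontr)
      assume "\<not> (\<exists>m\<in>M. E x m)"
      then have "stable E (insert x M)"
        using M irrefl sym unfolding maximal_stable_def stable_def by (metis insert_iff)
      with M x show False unfolding maximal_stable_def by blast
    qed
  qed (use M in \<open>auto simp: maximal_stable_def\<close>)
next
  assume "M \<subseteq> W \<and> stable E M \<and> (\<forall>x\<in>W - M. \<exists>m\<in>M. E x m)"
  then have M: "M \<subseteq> W" "stable E M" "\<And>x. x \<in> W - M \<Longrightarrow> \<exists>m\<in>M. E x m" by auto
  show "maximal_stable W E M" unfolding maximal_stable_def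
  proof (intro conjI allI impI notI)
    fix T assume T: "M \<subset> T \<and> T \<subseteq> W" and "stable E T"
    then obtain x where x: "x \<in> T" "x \<notin> M" by blast
    then obtain m where "m \<in> M" "E x m" using M(3) T by blast
    with T x \<open>stable E T\<close> show False unfolding stable_def by blast
  qed (use M in blast)+
qed

lemma maximal_stable_insert_centre:
  assumes "v \<in> W" "maximal_stable (W - insert v (nbrs W E v)) E M"
  shows "maximal_stable W E (insert v M)" "v \<notin> M"
proof -
  have M: "M \<subseteq> W - insert v (nbrs W E v)" "stable E M"
    "\<forall>x\<in>(W - insert v (nbrs W E v)) - M. \<exists>m\<in>M. E x m"
    using assms(2) maximal_stable_iff by auto
  then show "v \<notin> M" by blast
  show "maximal_stable W E (insert v M)" unfolding maximal_stable_iff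
  proof (intro conjI ballI)
    show "insert v M \<subseteq> W" using M(1) assms(1) by auto
    show "stable E (insert v M)" using M(1,2) sym irrefl unfolding stable_def nbrs_def by blast
  next
    fix x assume "x \<in> W - insert v M"
    then show "\<exists>m\<in>insert v M. E x m" using M(3) sym unfolding nbrs_def by blast
  qed
qed

lemma well_covered_delete_cnbhd:
  assumes "finite W" "well_covered W E" "v \<in> W"
  defines "W' \<equiv> W - insert v (nbrs W E v)"
  shows "well_covered W' E" "alpha W' E + 1 = alpha W E"
proof -
  have fin: "finite W'" using assms(1) unfolding W'_def by auto
  have card_M: "card M + 1 = alpha W E" if "maximal_stable W' E M" for M
  proof -
    note ins = maximal_stable_insert_centre[OF assms(3) that[unfolded W'_def]]
    have "finite M" using maximal_stableD[OF that] fin finite_subset by blast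
    with ins(2) well_covered_card[OF assms(1,2) ins(1)] show ?thesis by simp
  qed
  then show "well_covered W' E" unfolding well_covered_def by (metis add_right_cancel)
  obtain S where "S \<subseteq> W'" "stable E S" "card S = alpha W' E" using alpha_attained fin by blast
  with maximum_stable_is_maximal[OF fin] card_M show "alpha W' E + 1 = alpha W E" by metis
qed

text \<open>In a well-covered graph no vertex carries two pendant neighbours: otherwise the two
  pendants could replace their common neighbour in a maximum stable set.\<close>

lemma well_covered_no_two_pendants:
  assumes "finite W" "well_covered W E" "pendant W E l1 s" "pendant W E l2 s" "l1 \<noteq> l2"
  shows False
proof -
  have l: "l1 \<in> W" "l2 \<in> W" "s \<in> W" "E l1 s" "E l2 s"
    and only: "\<And>u. u \<in> W \<Longrightarrow> E l1 u \<Longrightarrow> u = s" "\<And>u. u \<in> W \<Longrightarrow> E l2 u \<Longrightarrow> u = s"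
    using assms(3,4) unfolding pendant_def nbrs_def by blast+
  let ?W = "W - insert s (nbrs W E s)"
  obtain S where S: "maximal_stable ?W E S"
    using maximal_stable_extends[of ?W "{}"] assms(1) by (auto simp: stable_def)
  have SW: "S \<subseteq> ?W" and stS: "stable E S" using maximal_stableD[OF S] by auto
  have fS: "finite S" using SW assms(1) finite_subset by blast
  have sS: "card (insert s S) = alpha W E" "s \<notin> S"
    using well_covered_card[OF assms(1,2)] maximal_stable_insert_centre[OF l(3) S] by auto
  have "l1 \<in> nbrs W E s" "l2 \<in> nbrs W E s" using l sym unfolding nbrs_def by auto
  then have lS: "l1 \<notin> S" "l2 \<notin> S" using SW by auto
  have sl: "s \<noteq> l1" "s \<noteq> l2" using l(4,5) irrefl by auto
  have pendant_nbr: "\<not> E l x" if "l \<in> {l1, l2}" "x \<in> S \<union> {l1, l2}" for l x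
  proof
    assume "E l x"
    moreover have "x \<in> W" using that(2) SW l by blast
    ultimately have "x = s" using only that(1) by blast
    then show False using that(2) sS(2) sl by blast
  qed
  have "stable E (S \<union> {l1, l2})"
    unfolding stable_def
  proof (intro ballI notI)
    fix a b assume ab: "a \<in> S \<union> {l1, l2}" "b \<in> S \<union> {l1, l2}" "E a b"
    consider "a \<in> {l1, l2}" | "b \<in> {l1, l2}" | "a \<in> S" "b \<in> S" using ab by blast
    then show False
      by cases (use ab pendant_nbr sym stS in \<open>auto simp: stable_def\<close>)
  qed
  moreover have "S \<union> {l1, l2} \<subseteq> W" using SW l by auto
  ultimately have "card (S \<union> {l1, l2}) \<le> alpha W E" using card_le_alpha assms(1) by blast
  moreover have "card (S \<union> {l1, l2}) = card S + 2" using fS lS assms(5) by simp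
  moreover have "card (insert s S) = card S + 1" using fS sS(2) by simp
  ultimately show False using sS(1) by linarith
qed

text \<open>Deleting a pendant edge of a well-covered graph creates no new isolated vertex,
  because two pendants never share their neighbour.\<close>

lemma isolated_delete_pendant_edge:
  assumes "finite W" "well_covered W E" "pendant W E v s"
  shows "isolated (W - {v, s}) E = isolated W E"
proof (intro equalityI subsetI)
  have v: "v \<in> W" "s \<in> W" "E v s" "\<And>u. u \<in> W \<Longrightarrow> E v u \<Longrightarrow> u = s"
    using assms(3) unfolding pendant_def nbrs_def by blast+
  fix w
  assume w: "w \<in> isolated (W - {v, s}) E"
  then have wW: "w \<in> W" "w \<noteq> v" "w \<noteq> s" unfolding isolated_def by auto
  have nbrs_w: "nbrs W E w \<subseteq> {s}"
    using w v(4) sym unfolding isolated_def nbrs_def by auto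
  have "nbrs W E w \<noteq> {s}"
    using well_covered_no_two_pendants[OF assms(1,2,3), of w] wW unfolding pendant_def by auto
  with nbrs_w wW show "w \<in> isolated W E" unfolding isolated_def by auto
next
  fix w
  assume "w \<in> isolated W E"
  moreover have "v \<notin> isolated W E" "s \<notin> isolated W E"
    using assms(3) sym unfolding pendant_def isolated_def nbrs_def by auto
  ultimately show "w \<in> isolated (W - {v, s}) E" unfolding isolated_def nbrs_def by auto
qed

lemma matching_on_insert_edge:
  assumes "matching_on S E q" "v \<notin> S" "s \<notin> S" "E v s"
  shows "matching_on (insert v (insert s S)) E (q(v := s, s := v))"
proof -
  have "v \<noteq> s" using assms(4) irrefl by blast
  moreover have "q x \<noteq> v" "q x \<noteq> s" if "x \<in> S" for x
    using assms(1-3) that unfolding matching_on_def by metis+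
  ultimately show ?thesis
    using assms sym unfolding matching_on_def by auto
qed

text \<open>Deleting a pendant edge preserves the counting bound: \<open>alpha\<close> drops by one, |W| by
  two, the isolated vertices stay the same, and a matching of the rest extends by the edge.\<close>

lemma alpha_matching_bound_pendant:
  assumes fin: "finite W" and wc: "well_covered W E" and pendant: "pendant W E v s"
    and bound: "alpha_matching_bound (W - {v, s}) E"
  shows "alpha_matching_bound W E"
proof -
  have vs: "v \<in> W" "s \<in> W" "E v s" "nbrs W E v = {s}" "v \<noteq> s"
    using pendant irrefl unfolding pendant_def nbrs_def by blast+
  define W' where "W' = W - {v, s}"
  have "W' = W - insert v (nbrs W E v)" unfolding W'_def vs(4) by blast
  then have alpha': "alpha W' E + 1 = alpha W E"
    using well_covered_delete_cnbhd(2)[OF fin wc vs(1)] by simp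
  have sub: "{v, s} \<subseteq> W" using vs by blast
  have card': "card W = card W' + 2"
    using card_Diff_subset[OF _ sub] card_mono[OF fin sub] vs(5) unfolding W'_def by auto
  have iso': "isolated W' E = isolated W E"
    unfolding W'_def using isolated_delete_pendant_edge[OF fin wc pendant] .
  have IH: "2 * alpha W' E \<le> card W' + card (isolated W' E)"
    "2 * alpha W' E = card W' + card (isolated W' E) \<Longrightarrow> \<exists>q. matching_on (W' - isolated W' E) E q"
    using bound unfolding alpha_matching_bound_def W'_def by auto
  have "\<exists>p. matching_on (W - isolated W E) E p"
    if "2 * alpha W E = card W + card (isolated W E)"
  proof -
    have "2 * alpha W' E = card W' + card (isolated W' E)" using that alpha' card' iso' by simp
    then obtain q where q: "matching_on (W' - isolated W' E) E q" using IH(2) by blast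
    have "v \<notin> isolated W E" "s \<notin> isolated W E"
      using vs sym unfolding isolated_def nbrs_def by auto
    then have "W - isolated W E = insert v (insert s (W' - isolated W' E))"
      using iso' vs(1,2) unfolding W'_def by auto
    moreover have "v \<notin> W' - isolated W' E" "s \<notin> W' - isolated W' E" unfolding W'_def by auto
    ultimately show ?thesis using matching_on_insert_edge[OF q _ _ vs(3)] by metis
  qed
  then show ?thesis using IH(1) alpha' card' iso' unfolding alpha_matching_bound_def by auto
qed

text \<open>A stable set avoiding both ends of a matching edge {x, p x} is disjoint from its image
  under p, and both lie in V - {x, p x}; hence it has at most |V|/2 - 1 elements.\<close>

lemma stable_avoiding_matching_edge:
  assumes p: "matching_on V E p" and x: "x \<in> V"
    and M: "M \<subseteq> V" "stable E M" "x \<notin> M" "p x \<notin> M"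
  shows "2 * card M + 2 \<le> card V"
proof -
  have px: "p x \<in> V" "E x (p x)" "p (p x) = x" using p x unfolding matching_on_def by auto
  have fM: "finite M" using M(1) finite_V finite_subset by blast
  have disjoint: "M \<inter> p ` M = {}"
    using p M(1,2) unfolding matching_on_def stable_def by blast
  have inj: "inj_on p M"
    using p M(1) unfolding matching_on_def by (metis inj_onI subsetD)
  have "card (M \<union> p ` M) = card M + card (p ` M)"
    by (rule card_Un_disjoint[OF fM finite_imageI[OF fM] disjoint])
  then have card_double: "card (M \<union> p ` M) = 2 * card M" using card_image[OF inj] by simp
  have "p ` M \<subseteq> V - {x, p x}"
  proof (rule image_subsetI)
    fix m assume "m \<in> M"
    then have pm: "p m \<in> V" "p (p m) = m" using M(1) p unfolding matching_on_def by auto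
    then have "p m \<noteq> x" "p m \<noteq> p x" using \<open>m \<in> M\<close> M(3,4) px(3) by metis+
    with pm(1) show "p m \<in> V - {x, p x}" by blast
  qed
  moreover have "M \<subseteq> V - {x, p x}" using M by blast
  ultimately have "M \<union> p ` M \<subseteq> V - {x, p x}" by (rule Un_least[rotated])
  then have le: "card (M \<union> p ` M) \<le> card (V - {x, p x})"
    by (rule card_mono[OF finite_Diff[OF finite_V]])
  have "x \<noteq> p x" using px(2) irrefl by metis
  then have sub: "{x, p x} \<subseteq> V" and two: "card {x, p x} = 2" using x px(1) by auto
  moreover have "card (V - {x, p x}) = card V - card {x, p x}"
    by (rule card_Diff_subset[OF finite_subset[OF sub finite_V] sub])
  moreover have "card {x, p x} \<le> card V" by (rule card_mono[OF finite_V sub])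
  ultimately show ?thesis using le card_double by linarith
qed

lemma triangle_is_cycle:
  assumes "E a b" "E b c" "E c a"
  shows "is_cycle V E [a, b, c]"
  unfolding is_cycle_def
proof (intro conjI allI impI)
  show "distinct [a, b, c]" using assms irrefl by auto
  show "set [a, b, c] \<subseteq> V" using assms edge_V by auto
  fix i assume "i < length [a, b, c]"
  then have "i = 0 \<or> i = 1 \<or> i = 2" by auto
  then show "E ([a, b, c] ! i) ([a, b, c] ! ((i + 1) mod length [a, b, c]))" using assms by auto
qed simp

lemma square_is_cycle:
  assumes "E a b" "E b c" "E c d" "E d a" "a \<noteq> c" "b \<noteq> d"
  shows "is_cycle V E [a, b, c, d]"
  unfolding is_cycle_def
proof (intro conjI allI impI)
  show "distinct [a, b, c, d]" using assms irrefl by auto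
  show "set [a, b, c, d] \<subseteq> V" using assms edge_V by auto
  fix i assume "i < length [a, b, c, d]"
  then have "i = 0 \<or> i = 1 \<or> i = 2 \<or> i = 3" by auto
  then show "E ([a, b, c, d] ! i) ([a, b, c, d] ! ((i + 1) mod length [a, b, c, d]))"
    using assms by auto
qed simp

end

section \<open>C4-free graphs: the counting theorem\<close>

locale c4_free_graph = simple_graph +
  assumes no_C4: "E a b \<Longrightarrow> E b c \<Longrightarrow> E c d \<Longrightarrow> E d a \<Longrightarrow> a \<noteq> c \<Longrightarrow> b \<noteq> d \<Longrightarrow> False"
begin

text \<open>In a C4-free graph without pendant vertices, deleting the closed neighbourhood of a
  non-isolated vertex creates no new isolated vertex: a vertex whose neighbours all lie in
  N(v) has exactly one of them, hence would be pendant.\<close>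

lemma isolated_delete_cnbhd:
  assumes no_pendant: "\<And>w s. \<not> pendant W E w s" and v: "v \<in> W - isolated W E"
  shows "isolated (W - insert v (nbrs W E v)) E = isolated W E"
proof (intro equalityI subsetI)
  fix w
  assume w: "w \<in> isolated (W - insert v (nbrs W E v)) E"
  then have wW: "w \<in> W" "w \<noteq> v" "\<not> E v w" unfolding isolated_def nbrs_def by auto
  have in_Nv: "E v u" if "u \<in> nbrs W E w" for u
    using w that wW sym unfolding isolated_def nbrs_def by auto
  have "nbrs W E w = {}"
  proof (rule ccontr)
    assume "nbrs W E w \<noteq> {}"
    then obtain u where u: "u \<in> nbrs W E w" by blast
    have "nbrs W E w = {u}"
    proof (intro equalityI subsetI)
      fix u' assume u': "u' \<in> nbrs W E w"
      show "u' \<in> {u}"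
      proof (rule ccontr)
        assume "u' \<notin> {u}"
        then show False
          using no_C4[of w u v u'] u u' in_Nv sym wW(2) unfolding nbrs_def by auto
      qed
    qed (use u in blast)
    then show False using no_pendant wW(1) unfolding pendant_def by blast
  qed
  then show "w \<in> isolated W E" using wW(1) unfolding isolated_def by blast
next
  fix w
  assume "w \<in> isolated W E"
  with v sym show "w \<in> isolated (W - insert v (nbrs W E v)) E"
    unfolding isolated_def nbrs_def by auto
qed

text \<open>Deleting the closed neighbourhood of a non-isolated vertex v of a graph without pendant
  vertices removes at least three vertices but lowers \<open>alpha\<close> only by one, so the counting
  bound for the rest makes the bound for W strict.\<close>

lemma alpha_bound_strict:
  assumes fin: "finite W" and wc: "well_covered W E"
    and no_pendant: "\<And>w s. \<not> pendant W E w s" and v: "v \<in> W - isolated W E"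
  defines "W' \<equiv> W - insert v (nbrs W E v)"
  assumes bound: "2 * alpha W' E \<le> card W' + card (isolated W' E)"
  shows "2 * alpha W E < card W + card (isolated W E)"
proof -
  define D where "D = nbrs W E v"
  have alpha': "alpha W' E + 1 = alpha W E"
    using well_covered_delete_cnbhd(2)[OF fin wc] v unfolding W'_def by auto
  have iso': "isolated W' E = isolated W E"
    using isolated_delete_cnbhd[OF no_pendant v] unfolding W'_def .
  have fD: "finite D" and vD: "v \<notin> D" and DW: "insert v D \<subseteq> W"
    using fin v irrefl unfolding D_def nbrs_def by auto
  have "D \<noteq> {}" "\<not> (\<exists>s. D = {s})"
    using no_pendant v unfolding D_def isolated_def pendant_def by auto
  then have "card D \<noteq> 0" "card D \<noteq> 1" using fD by (auto simp: card_1_singleton_iff)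
  moreover have "card W = card W' + card D + 1"
    using card_Diff_subset[OF _ DW] card_mono[OF fin DW] fD vD unfolding W'_def D_def by simp
  ultimately show ?thesis using bound[unfolded iso'] alpha' by linarith
qed

text \<open>The counting theorem, by induction on |W|: remove a pendant edge if there is one,
  otherwise the closed neighbourhood of a non-isolated vertex.\<close>

lemma alpha_matching_bound_holds:
  assumes "finite W" "well_covered W E"
  shows "alpha_matching_bound W E"
  using assms
proof (induction "card W" arbitrary: W rule: less_induct)
  case less
  note fin = less.prems(1) and wc = less.prems(2)
  have smaller: "card (W - insert v X) < card W" if "v \<in> W" for v X
  proof (rule psubset_card_mono[OF fin])
    show "W - insert v X \<subset> W" using that by blast
  qed
  consider (all_isolated) "isolated W E = W"
    | (pendant) v s where "pendant W E v s"
    | (no_pendant) v where "v \<in> W - isolated W E" "\<And>w s. \<not> pendant W E w s"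
  proof (cases "\<exists>v s. pendant W E v s")
    case True
    then show ?thesis using that(2) by blast
  next
    case no_pendant: False
    show ?thesis
    proof (cases "isolated W E = W")
      case True
      then show ?thesis using that(1) by blast
    next
      case False
      then obtain v where "v \<in> W - isolated W E" using isolated_subset[of W E] by blast
      then show ?thesis using that(3) no_pendant by blast
    qed
  qed
  then show ?case
  proof cases
    case all_isolated
    then show ?thesis
      using alpha_all_isolated[OF fin] unfolding alpha_matching_bound_def matching_on_def by simp
  next
    case pendant
    then have v: "v \<in> W" and W': "W - insert v (nbrs W E v) = W - {v, s}"
      unfolding pendant_def by auto
    have "well_covered (W - {v, s}) E" using well_covered_delete_cnbhd(1)[OF fin wc v] W' by simp
    then have "alpha_matching_bound (W - {v, s}) E"
      using less.hyps[OF smaller[OF v] finite_Diff[OF fin]] by simp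
    then show ?thesis by (rule alpha_matching_bound_pendant[OF fin wc pendant])
  next
    case no_pendant
    then have v: "v \<in> W" by blast
    let ?W' = "W - insert v (nbrs W E v)"
    have "alpha_matching_bound ?W' E"
      using less.hyps[OF smaller[OF v] finite_Diff[OF fin]] well_covered_delete_cnbhd(1)[OF fin wc v]
      by simp
    then have "2 * alpha ?W' E \<le> card ?W' + card (isolated ?W' E)"
      unfolding alpha_matching_bound_def by blast
    then have "2 * alpha W E < card W + card (isolated W E)"
      by (rule alpha_bound_strict[OF fin wc no_pendant(2,1)])
    then show ?thesis unfolding alpha_matching_bound_def by simp
  qed
qed

end

section \<open>Girth at least five\<close>

locale girth5_graph = c4_free_graph +
  assumes no_triangle: "E a b \<Longrightarrow> E b c \<Longrightarrow> E c a \<Longrightarrow> False"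
begin

text \<open>In a very well-covered graph of girth \<ge> 5 with perfect matching p, every matching edge
  has a pendant endpoint.  Otherwise x and p x have further neighbours u and w; these are
  distinct and non-adjacent (no triangle, no C4), so a maximum stable set M \<supseteq> {u, w} avoids
  x and p x, and M \<union> p`M would fit into the |V| - 2 = 2\<alpha> - 2 remaining vertices.\<close>

lemma matching_edge_pendant:
  assumes wc: "well_covered V E" and cV: "card V = 2 * alpha V E"
    and p: "matching_on V E p" and x: "x \<in> V"
  shows "(\<forall>u. E x u \<longrightarrow> u = p x) \<or> (\<forall>u. E (p x) u \<longrightarrow> u = x)"
proof (rule ccontr)
  assume "\<not> ?thesis"
  then obtain u w where u: "E x u" "u \<noteq> p x" and w: "E (p x) w" "w \<noteq> x" by blast
  have px: "E x (p x)" using p x unfolding matching_on_def by auto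
  have "u \<noteq> w" using no_triangle[OF u(1) _ px[THEN sym]] w(1) sym by blast
  moreover have "\<not> E u w" using no_C4[OF u(1) _ w(1)[THEN sym] px[THEN sym]] w(2) u(2) by blast
  ultimately have "stable E {u, w}" using irrefl sym unfolding stable_def by blast
  moreover have "{u, w} \<subseteq> V" using u(1) w(1) edge_V by blast
  ultimately obtain M where M: "maximal_stable V E M" "{u, w} \<subseteq> M"
    using maximal_stable_extends[OF finite_V] by blast
  have MV: "M \<subseteq> V" and stM: "stable E M" using maximal_stableD[OF M(1)] by auto
  have xM: "x \<notin> M" "p x \<notin> M" using stM M(2) u(1) w(1) unfolding stable_def by blast+
  have "2 * card M + 2 \<le> card V" by (rule stable_avoiding_matching_edge[OF p x MV stM xM])
  moreover have "card M = alpha V E" using well_covered_card[OF finite_V wc M(1)] .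
  ultimately show False using cV by linarith
qed
end

section \<open>Coronas and their local maximum stable sets\<close>

text \<open>Graphs with a perfect matching p in which every matching edge has a pendant endpoint
  (coronas, possibly with K2 components).  Here \<open>\<Psi>\<close> has a simple description.\<close>

locale corona_graph = simple_graph +
  fixes p :: "'a \<Rightarrow> 'a"
  assumes matching: "matching_on V E p"
    and pendant_end: "x \<in> V \<Longrightarrow> (\<forall>u. E x u \<longrightarrow> u = p x) \<or> (\<forall>u. E (p x) u \<longrightarrow> u = x)"
begin

lemma partner: "x \<in> V \<Longrightarrow> p x \<in> V" "x \<in> V \<Longrightarrow> E x (p x)" "x \<in> V \<Longrightarrow> p (p x) = x"
  using matching unfolding matching_on_def by auto

definition leaf :: "'a \<Rightarrow> bool" where
  "leaf x \<longleftrightarrow> (\<forall>u. E x u \<longrightarrow> u = p x)"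

lemma leaf_or_partner_leaf: "x \<in> V \<Longrightarrow> leaf x \<or> leaf (p x)"
  using pendant_end partner(3) unfolding leaf_def by metis

lemma partner_not_in_stable: "A \<subseteq> V \<Longrightarrow> stable E A \<Longrightarrow> a \<in> A \<Longrightarrow> p a \<notin> A"
  using partner(2) unfolding stable_def by blast

text \<open>If every member x of a stable set S has x or its partner p x in B, then |S| \<le> |B|:
  picking that element is injective, as members of S lie on distinct matching edges.\<close>

lemma card_le_by_partners:
  assumes S: "S \<subseteq> V" "stable E S" and "finite B"
    and hit: "\<And>x. x \<in> S \<Longrightarrow> x \<in> B \<or> p x \<in> B"
  shows "card S \<le> card B"
proof -
  define f where "f t = (if t \<in> B then t else p t)" for t
  have "inj_on f S"
  proof (rule inj_onI)
    fix t1 t2 assume t: "t1 \<in> S" "t2 \<in> S" "f t1 = f t2"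
    have V: "t1 \<in> V" "t2 \<in> V" using t S(1) by auto
    have "\<not> E t1 t2" "\<not> E t2 t1" using t S(2) unfolding stable_def by blast+
    then have "t1 \<noteq> p t2" "p t1 \<noteq> t2" using partner(2) V by metis+
    moreover have "t1 = t2" if "p t1 = p t2" using that V partner(3) by metis
    ultimately show "t1 = t2" using t(3) unfolding f_def by (auto split: if_splits)
  qed
  moreover have "f ` S \<subseteq> B" using hit unfolding f_def by auto
  ultimately show ?thesis using card_inj_on_le[OF _ _ assms(3)] by blast
qed

text \<open>Sufficient condition for membership in \<open>\<Psi>\<close>: a stable set containing the partner of
  each of its neighbours dominates, via the matching, every stable set of N[A].\<close>

lemma Psi_if_closed:
  assumes A: "A \<subseteq> V" "stable E A" and closed: "\<And>u. u \<in> nbhd V E A \<Longrightarrow> p u \<in> A"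
  shows "A \<in> Psi V E"
proof -
  have "card T \<le> card A" if "T \<subseteq> cnbhd V E A" "stable E T" for T
  proof (rule card_le_by_partners)
    show "T \<subseteq> V" using that(1) A(1) unfolding cnbhd_def nbhd_def by blast
    show "finite A" using A(1) finite_V finite_subset by blast
  qed (use that closed in \<open>auto simp: cnbhd_def\<close>)
  moreover have "A \<subseteq> cnbhd V E A" unfolding cnbhd_def by blast
  ultimately show ?thesis
    using A unfolding Psi_def local_max_stable_def max_stable_def by simp
qed

definition leaf_end :: "'a \<Rightarrow> 'a" where
  "leaf_end a = (if leaf a then a else p a)"

lemma leaf_end:
  assumes "a \<in> V"
  shows "leaf_end a \<in> {a, p a}" "p (leaf_end a) \<in> {a, p a}" "leaf (leaf_end a)" "leaf_end a \<in> V"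
proof -
  show "leaf_end a \<in> {a, p a}" unfolding leaf_end_def by simp
  show "p (leaf_end a) \<in> {a, p a}" using partner(3)[OF assms] unfolding leaf_end_def by simp
  show "leaf (leaf_end a)" using leaf_or_partner_leaf[OF assms] unfolding leaf_end_def
    by (cases "leaf a") simp_all
  show "leaf_end a \<in> V" using partner(1)[OF assms] assms unfolding leaf_end_def by simp
qed

lemma matching_edges_disjoint:
  assumes A: "A \<subseteq> V" "stable E A" and a: "a1 \<in> A" "a2 \<in> A"
    and y: "y \<in> {a1, p a1}" "y \<in> {a2, p a2}"
  shows "a1 = a2"
proof -
  have "a1 \<noteq> p a2" "p a1 \<noteq> a2" using partner_not_in_stable[OF A] a by metis+
  moreover have "a1 = a2" if "p a1 = p a2" using that A(1) a partner(3) by (metis subsetD)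
  ultimately show ?thesis using y by auto
qed

text \<open>Given a stable set A and a vertex u such that neither u nor its partner lies in A,
  the pendant endpoints of the matching edges at A together with u form a stable set of
  size |A| + 1 inside A \<union> p`A \<union> {u}.\<close>

lemma leaf_transversal:
  assumes A: "A \<subseteq> V" "stable E A" and u: "u \<in> V" "u \<notin> A" "p u \<notin> A"
  obtains T where "T \<subseteq> insert u (A \<union> p ` A)" "stable E T" "card T = card A + 1"
proof -
  have AV: "a \<in> V" if "a \<in> A" for a using that A(1) by blast
  note lend = leaf_end[OF AV]
  note same_edge = matching_edges_disjoint[OF A]
  have u_out: "u \<notin> {a, p a}" if "a \<in> A" for a
    using that u partner(3)[OF AV[OF that]] by auto
  have inj: "inj_on leaf_end A"
  proof (rule inj_onI)
    fix a1 a2 assume a: "a1 \<in> A" "a2 \<in> A" "leaf_end a1 = leaf_end a2"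
    then show "a1 = a2"
      using same_edge[OF a(1,2), of "leaf_end a1"] lend(1)[OF a(1)] lend(1)[OF a(2)] by simp
  qed
  have u_g: "u \<notin> leaf_end ` A" using u_out lend(1) by blast
  have no_edge: "\<not> E (leaf_end a) y" if a: "a \<in> A" and y: "y \<in> insert u (leaf_end ` A)" for a y
  proof
    assume e: "E (leaf_end a) y"
    then have y_eq: "y = p (leaf_end a)" using lend(3)[OF a] unfolding leaf_def by blast
    show False
    proof (cases "y = u")
      case True then show False using y_eq lend(2)[OF a] u_out[OF a] by simp
    next
      case False
      then obtain a' where a': "a' \<in> A" "y = leaf_end a'" using y by blast
      then have "a' = a" using same_edge[OF a'(1) a] lend(1)[OF a'(1)] lend(2)[OF a] y_eq by simp
      then show False using e a' y_eq irrefl by simp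
    qed
  qed
  have "stable E (insert u (leaf_end ` A))"
    unfolding stable_def
  proof (intro ballI notI)
    fix x y assume x: "x \<in> insert u (leaf_end ` A)" and y: "y \<in> insert u (leaf_end ` A)" and e: "E x y"
    consider "x = u" "y = u" | a where "a \<in> A" "x = leaf_end a" | a where "a \<in> A" "y = leaf_end a"
      using x y by blast
    then show False
    proof cases
      case 1 then show False using e irrefl by simp
    next
      case 2 then show False using no_edge y e by blast
    next
      case 3 then show False using no_edge[OF 3(1) x] sym[OF e] by simp
    qed
  qed
  moreover have "leaf_end ` A \<subseteq> A \<union> p ` A"
  proof (rule image_subsetI)
    fix a assume "a \<in> A"
    then show "leaf_end a \<in> A \<union> p ` A" using lend(1)[of a] by auto
  qed
  then have "insert u (leaf_end ` A) \<subseteq> insert u (A \<union> p ` A)" by blast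
  moreover have "card (insert u (leaf_end ` A)) = card A + 1"
    using u_g card_image[OF inj] finite_subset[OF A(1) finite_V] by simp
  ultimately show ?thesis using that by blast
qed

text \<open>Conversely every member of \<open>\<Psi>\<close> contains the partner of each of its neighbours:
  otherwise \<open>leaf_transversal\<close> yields a larger stable set inside N[A].\<close>

lemma closed_if_Psi:
  assumes A: "A \<in> Psi V E" and u: "u \<in> nbhd V E A"
  shows "p u \<in> A"
proof (rule ccontr)
  assume pu: "p u \<notin> A"
  have AV: "A \<subseteq> V" and stA: "stable E A"
    and max: "\<And>T. T \<subseteq> cnbhd V E A \<Longrightarrow> stable E T \<Longrightarrow> card T \<le> card A"
    using A unfolding Psi_def local_max_stable_def max_stable_def by auto
  have uV: "u \<in> V" "u \<notin> A" using u unfolding nbhd_def by auto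
  obtain T where T: "T \<subseteq> insert u (A \<union> p ` A)" "stable E T" "card T = card A + 1"
    using leaf_transversal[OF AV stA uV pu] .
  have "p a \<in> nbhd V E A" if "a \<in> A" for a
  proof -
    have "a \<in> V" using that AV by blast
    then have "p a \<in> V" "E (p a) a" using partner(1,2) sym by auto
    moreover have "p a \<notin> A" using partner_not_in_stable[OF AV stA that] .
    ultimately show ?thesis using that unfolding nbhd_def by blast
  qed
  then have "insert u (A \<union> p ` A) \<subseteq> cnbhd V E A" using u unfolding cnbhd_def by blast
  then have "card T \<le> card A" using max[OF _ T(2)] T(1) by blast
  then show False using T(3) by simp
qed

lemma Psi_iff:
  "A \<in> Psi V E \<longleftrightarrow> A \<subseteq> V \<and> stable E A \<and> (\<forall>u\<in>nbhd V E A. p u \<in> A)"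
proof
  assume "A \<in> Psi V E"
  then show "A \<subseteq> V \<and> stable E A \<and> (\<forall>u\<in>nbhd V E A. p u \<in> A)"
    using closed_if_Psi unfolding Psi_def local_max_stable_def max_stable_def by simp
qed (use Psi_if_closed in blast)

text \<open>Removing a vertex a keeps a set in \<open>\<Psi>\<close> as long as its partner has no other neighbour
  in the set (only the partner of a can become a new neighbour lacking its partner).\<close>

lemma Psi_remove:
  assumes A: "A \<in> Psi V E" and a: "a \<in> A" and free: "\<And>b. b \<in> A - {a} \<Longrightarrow> \<not> E (p a) b"
  shows "A - {a} \<in> Psi V E"
proof -
  have AV: "A \<subseteq> V" and stA: "stable E A" and closed: "\<And>u. u \<in> nbhd V E A \<Longrightarrow> p u \<in> A"
    using A Psi_iff by auto
  have "p u \<in> A - {a}" if u: "u \<in> nbhd V E (A - {a})" for u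
  proof -
    obtain b where b: "b \<in> A - {a}" "E u b" and uV: "u \<in> V" "u \<notin> A - {a}"
      using u unfolding nbhd_def by blast
    have "u \<noteq> a" using stA a b unfolding stable_def by blast
    then have "u \<in> nbhd V E A" using uV b unfolding nbhd_def by blast
    moreover have "p u \<noteq> a" using free[OF b(1)] b(2) partner(3)[OF uV(1)] by metis
    ultimately show ?thesis using closed by blast
  qed
  moreover have "stable E (A - {a})" using stA unfolding stable_def by blast
  ultimately show ?thesis using AV Psi_iff by blast
qed

text \<open>Accessibility: remove a vertex whose partner is a pendant vertex; if there is none,
  all members of A are pendant and any vertex can be removed.\<close>

lemma Psi_accessible:
  assumes A: "A \<in> Psi V E" and "A \<noteq> {}"
  shows "\<exists>a\<in>A. A - {a} \<in> Psi V E"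
proof -
  have AV: "A \<subseteq> V" using A Psi_iff by auto
  show ?thesis
  proof (cases "\<exists>a\<in>A. leaf (p a)")
    case True
    then obtain a where a: "a \<in> A" "leaf (p a)" by blast
    have "\<not> E (p a) b" if "b \<in> A - {a}" for b
      using a that partner(3) AV unfolding leaf_def by blast
    then show ?thesis using Psi_remove[OF A a(1)] a(1) by blast
  next
    case False
    obtain a where a: "a \<in> A" using \<open>A \<noteq> {}\<close> by blast
    have "\<not> E (p a) b" if b: "b \<in> A - {a}" for b
    proof
      assume "E (p a) b"
      moreover have "leaf b" using leaf_or_partner_leaf False b AV by blast
      ultimately have "p a = p b" using sym unfolding leaf_def by blast
      then show False using partner(3) AV a b by (metis DiffE singletonI subsetD)
    qed
    then show ?thesis using Psi_remove[OF A a] a by blast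
  qed
qed

lemma Psi_insert:
  assumes Y: "Y \<in> Psi V E" and x: "x \<in> V" "x \<notin> Y" "p x \<notin> Y"
    and nbrs_closed: "\<And>u. E x u \<Longrightarrow> u \<noteq> p x \<Longrightarrow> p u \<in> Y"
  shows "insert x Y \<in> Psi V E"
proof -
  have YV: "Y \<subseteq> V" and stY: "stable E Y" and closed: "\<And>u. u \<in> nbhd V E Y \<Longrightarrow> p u \<in> Y"
    using Y Psi_iff by auto
  have x_far: "\<not> E x y" if "y \<in> Y" for y
  proof
    assume "E x y"
    then have "x \<in> nbhd V E Y" using x(1,2) that unfolding nbhd_def by blast
    then show False using closed x(3) by blast
  qed
  have "stable E (insert x Y)"
    using stY x_far sym irrefl unfolding stable_def by (metis insert_iff)
  moreover have "p u \<in> insert x Y" if u: "u \<in> nbhd V E (insert x Y)" for u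
  proof -
    obtain a where a: "a \<in> insert x Y" "E u a" and uV: "u \<in> V" "u \<notin> insert x Y"
      using u unfolding nbhd_def by blast
    show ?thesis
    proof (cases "a = x")
      case True
      then have "E x u" using a(2) sym by blast
      then show ?thesis using nbrs_closed partner(3)[OF x(1)] by (cases "u = p x") auto
    next
      case False
      then have "u \<in> nbhd V E Y" using a uV unfolding nbhd_def by blast
      then show ?thesis using closed by blast
    qed
  qed
  ultimately show ?thesis using YV x(1) Psi_iff by blast
qed

text \<open>Exchange: since |X| > |Y|, some x \<in> X has neither itself nor its partner in Y.  If x
  has another neighbour u whose partner is missing from Y, then u is not pendant, so p u is
  pendant, lies in X, and can be added instead.\<close>

lemma Psi_exchange:
  assumes X: "X \<in> Psi V E" and Y: "Y \<in> Psi V E" and card: "card X = card Y + 1"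
  shows "\<exists>x\<in>X - Y. Y \<union> {x} \<in> Psi V E"
proof -
  have XV: "X \<subseteq> V" and stX: "stable E X" and closedX: "\<And>u. u \<in> nbhd V E X \<Longrightarrow> p u \<in> X"
    using X Psi_iff by auto
  have YV: "Y \<subseteq> V" and closedY: "\<And>u. u \<in> nbhd V E Y \<Longrightarrow> p u \<in> Y"
    using Y Psi_iff by auto
  obtain x where x: "x \<in> X" "x \<notin> Y" "p x \<notin> Y"
  proof (rule ccontr)
    assume "\<not> thesis"
    then have "\<And>x. x \<in> X \<Longrightarrow> x \<in> Y \<or> p x \<in> Y" using that by blast
    then have "card X \<le> card Y"
      using card_le_by_partners[OF XV stX finite_subset[OF YV finite_V]] by blast
    then show False using card by simp
  qed
  have xV: "x \<in> V" using x(1) XV by blast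
  show ?thesis
  proof (cases "\<forall>u. E x u \<longrightarrow> u \<noteq> p x \<longrightarrow> p u \<in> Y")
    case True
    then show ?thesis using Psi_insert[OF Y xV x(2,3)] x(1,2) by auto
  next
    case False
    then obtain u where u: "E x u" "u \<noteq> p x" "p u \<notin> Y" by blast
    have uV: "u \<in> V" using u(1) edge_V by blast
    have "u \<notin> X" using stX x(1) u(1) unfolding stable_def by blast
    then have "u \<in> nbhd V E X" using uV u(1) x(1) sym unfolding nbhd_def by blast
    then have puX: "p u \<in> X" using closedX by blast
    have "u \<notin> Y"
    proof
      assume "u \<in> Y"
      then have "x \<in> nbhd V E Y" using xV x(2) u(1) unfolding nbhd_def by blast
      then show False using closedY x(3) by blast
    qed
    have "x \<noteq> p u" using u(2) partner(3)[OF uV] by metis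
    then have "\<not> leaf u" using u(1) sym unfolding leaf_def by blast
    then have "leaf (p u)" using leaf_or_partner_leaf[OF uV] by blast
    then have "\<And>w. E (p u) w \<Longrightarrow> w \<noteq> p (p u) \<Longrightarrow> p w \<in> Y" unfolding leaf_def by blast
    then have "insert (p u) Y \<in> Psi V E"
      using Psi_insert[OF Y partner(1)[OF uV]] u(3) \<open>u \<notin> Y\<close> partner(3)[OF uV] by simp
    then show ?thesis using puX u(3) by auto
  qed
qed

theorem greedoid_Psi: "greedoid V (Psi V E)"
  unfolding greedoid_def
proof (intro conjI ballI impI)
  have "{} \<in> Psi V E" using Psi_iff unfolding nbhd_def stable_def by auto
  then show "Psi V E \<noteq> {}" by blast
next
  fix X assume "X \<in> Psi V E" then show "X \<subseteq> V" using Psi_iff by blast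
next
  fix X assume "X \<in> Psi V E" "X \<noteq> {}" then show "\<exists>x\<in>X. X - {x} \<in> Psi V E"
    by (rule Psi_accessible)
next
  fix X Y assume "X \<in> Psi V E" "Y \<in> Psi V E" "card X = card Y + 1"
  then show "\<exists>x\<in>X - Y. Y \<union> {x} \<in> Psi V E" by (rule Psi_exchange)
qed

end

lemma girth5_graphI:
  assumes graph: "graph V E" and girth: "girth_ge V E 5"
  shows "girth5_graph V E"
proof -
  interpret simple_graph V E using graph by unfold_locales
  show ?thesis
  proof unfold_locales
    fix a b c d
    assume "E a b" "E b c" "E c d" "E d a" "a \<noteq> c" "b \<noteq> d"
    then have "is_cycle V E [a, b, c, d]" by (rule square_is_cycle)
    then show False using girth unfolding girth_ge_def by fastforce
  next
    fix a b c
    assume "E a b" "E b c" "E c a"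
    then have "is_cycle V E [a, b, c]" by (rule triangle_is_cycle)
    then show False using girth unfolding girth_ge_def by fastforce
  qed
qed

text \<open>Main theorem: very well-covered graphs of girth at least 5 are coronas, so their
  local maximum stable sets form a greedoid.\<close>

theorem corollary1:
  fixes V :: "'a set" and E :: "'a \<Rightarrow> 'a \<Rightarrow> bool"
  assumes "graph V E"
    and "very_well_covered V E"
    and "girth_ge V E 5"
  shows "greedoid V (Psi V E)"
proof -
  interpret girth5_graph V E using girth5_graphI assms(1,3) .
  have wc: "well_covered V E" and cV: "card V = 2 * alpha V E"
    and no_isolated: "\<forall>v\<in>V. \<exists>u. E v u"
    using assms(2) unfolding very_well_covered_def by auto
  have "isolated V E = {}"
    using no_isolated edge_V unfolding isolated_def nbrs_def by blast
  then obtain p where p: "matching_on V E p"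
    using alpha_matching_bound_holds[OF finite_V wc] cV unfolding alpha_matching_bound_def by auto
  interpret corona_graph V E p
    using assms(1) p matching_edge_pendant[OF wc cV p] by unfold_locales
  show ?thesis by (rule greedoid_Psi)
qed

end
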